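(* Let $R$ be a finite Frobenius ring and let $R/\mathrm{rad}(R)\cong(\mathbb{F}_{q_1})^{m_1\times m_1}\times\cdots\times(\mathbb{F}_{q_t})^{m_t\times m_t}$ be its Wedderburn–Artin decomposition (prime powers $q_i$, positive integers $m_i$). Let $\omega$ be the normalized homogeneous weight on $R$. Then there exists $x\in R\setminus\{0\}$ with $\omega(x)=0$ if and only if $(q_i,m_i)=(2,1)$ for at least two indices $i\in\{1,\ldots,t\}$.
   Context: $\mathrm{rad}(R)$ is the Jacobson radical. The normalized homogeneous weight on a finite Frobenius ring $R$ is the unique map $\omega:R\to\mathbb{R}$ with $\omega(0)=0$, $\omega(x)=\omega(y)$ whenever $Rx=Ry$, and $\sum_{y\in Rx}\omega(y)=|Rx|$ for every $x\in R\setminus\{0\}$. *)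

theory Defs
  imports Complex_Main "HOL-Algebra.Ring"
begin

definition left_ideal :: "'a::ring_1 set \<Rightarrow> bool" where
  "left_ideal I \<longleftrightarrow> 0 \<in> I \<and> (\<forall>x\<in>I. \<forall>y\<in>I. x + y \<in> I) \<and> (\<forall>r. \<forall>x\<in>I. r * x \<in> I)"

definition right_ideal :: "'a::ring_1 set \<Rightarrow> bool" where
  "right_ideal I \<longleftrightarrow> 0 \<in> I \<and> (\<forall>x\<in>I. \<forall>y\<in>I. x + y \<in> I) \<and> (\<forall>r. \<forall>x\<in>I. x * r \<in> I)"

definition maximal_left_ideal :: "'a::ring_1 set \<Rightarrow> bool" where
  "maximal_left_ideal I \<longleftrightarrow> left_ideal I \<and> I \<noteq> UNIV \<and>
     (\<forall>J. left_ideal J \<and> I \<subseteq> J \<longrightarrow> J = I \<or> J = UNIV)"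

definition minimal_left_ideal :: "'a::ring_1 set \<Rightarrow> bool" where
  "minimal_left_ideal I \<longleftrightarrow> left_ideal I \<and> I \<noteq> {0} \<and>
     (\<forall>J. left_ideal J \<and> J \<subseteq> I \<longrightarrow> J = {0} \<or> J = I)"

definition minimal_right_ideal :: "'a::ring_1 set \<Rightarrow> bool" where
  "minimal_right_ideal I \<longleftrightarrow> right_ideal I \<and> I \<noteq> {0} \<and>
     (\<forall>J. right_ideal J \<and> J \<subseteq> I \<longrightarrow> J = {0} \<or> J = I)"

definition jacobson_rad :: "'a::ring_1 set" where
  "jacobson_rad = \<Inter> {I. maximal_left_ideal I}"

text \<open>Left (right) socle: the sum of all minimal left (right) ideals, i.e. the
  smallest left (right) ideal containing all of them.\<close>
definition left_socle :: "'a::ring_1 set" where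
  "left_socle = \<Inter> {J. left_ideal J \<and> (\<forall>I. minimal_left_ideal I \<longrightarrow> I \<subseteq> J)}"

definition right_socle :: "'a::ring_1 set" where
  "right_socle = \<Inter> {J. right_ideal J \<and> (\<forall>I. minimal_right_ideal I \<longrightarrow> I \<subseteq> J)}"

text \<open>Finite Frobenius ring: R is finite, and R/rad(R) is isomorphic to soc(R) both as
  left and as right R-modules.  An isomorphism R/rad(R) ~= soc(R) is the same as an
  R-linear map R \<rightarrow> R with image soc(R) and kernel rad(R).\<close>
definition finite_frobenius_ring :: "'a::ring_1 itself \<Rightarrow> bool" where
  "finite_frobenius_ring (_ :: 'a itself) \<longleftrightarrow>
     finite (UNIV :: 'a set) \<and>
     (\<exists>f :: 'a \<Rightarrow> 'a. (\<forall>x y. f (x + y) = f x + f y) \<and> (\<forall>r x. f (r * x) = r * f x) \<and>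
        range f = left_socle \<and> {x. f x = 0} = jacobson_rad) \<and>
     (\<exists>g :: 'a \<Rightarrow> 'a. (\<forall>x y. g (x + y) = g x + g y) \<and> (\<forall>r x. g (x * r) = g x * r) \<and>
        range g = right_socle \<and> {x. g x = 0} = jacobson_rad)"

definition principal_left_ideal :: "'a::ring_1 \<Rightarrow> 'a set" where
  "principal_left_ideal x = range (\<lambda>r. r * x)"

definition normalized_homogeneous_weight :: "('a::ring_1 \<Rightarrow> real) \<Rightarrow> bool" where
  "normalized_homogeneous_weight \<omega> \<longleftrightarrow>
     \<omega> 0 = 0 \<and>
     (\<forall>x y. principal_left_ideal x = principal_left_ideal y \<longrightarrow> \<omega> x = \<omega> y) \<and>
     (\<forall>x. x \<noteq> 0 \<longrightarrow> (\<Sum>y\<in>principal_left_ideal x. \<omega> y) = real (card (principal_left_ideal x)))"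

text \<open>wedderburn_artin t q m K \<phi>: the fields K i (i < t) are finite fields
  with q i elements, m i \<ge> 1, and phi is a surjective unital ring
  homomorphism from R onto the product of the matrix rings
  (K i)^(m i \<times> m i) (i < t) whose kernel is rad(R); i.e. it induces
  R/rad(R) ~= Prod_{i<t} (F_{q i})^{m i \<times> m i}.  The entry (j,k) of the i-th matrix
  component of \<phi> x is \<phi> x i j k; entries outside the index ranges
  are irrelevant.\<close>
definition wedderburn_artin ::
  "nat \<Rightarrow> (nat \<Rightarrow> nat) \<Rightarrow> (nat \<Rightarrow> nat) \<Rightarrow> (nat \<Rightarrow> 'c ring) \<Rightarrow> ('a::ring_1 \<Rightarrow> nat \<Rightarrow> nat \<Rightarrow> nat \<Rightarrow> 'c) \<Rightarrow> bool"
where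
  "wedderburn_artin t q m K \<phi> \<longleftrightarrow>
     (\<forall>i<t. field (K i) \<and> finite (carrier (K i)) \<and> card (carrier (K i)) = q i \<and> m i \<ge> 1) \<and>
     (\<forall>x. \<forall>i<t. \<forall>j<m i. \<forall>k<m i. \<phi> x i j k \<in> carrier (K i)) \<and>
     (\<forall>x y. \<forall>i<t. \<forall>j<m i. \<forall>k<m i.
        \<phi> (x + y) i j k = \<phi> x i j k \<oplus>\<^bsub>K i\<^esub> \<phi> y i j k) \<and>
     (\<forall>x y. \<forall>i<t. \<forall>j<m i. \<forall>k<m i.
        \<phi> (x * y) i j k = (\<Oplus>\<^bsub>K i\<^esub> l\<in>{..<m i}. \<phi> x i j l \<otimes>\<^bsub>K i\<^esub> \<phi> y i l k)) \<and>
     (\<forall>i<t. \<forall>j<m i. \<forall>k<m i. \<phi> 1 i j k = (if j = k then \<one>\<^bsub>K i\<^esub> else \<zero>\<^bsub>K i\<^esub>)) \<and>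
     (\<forall>M. (\<forall>i<t. \<forall>j<m i. \<forall>k<m i. M i j k \<in> carrier (K i)) \<longrightarrow>
        (\<exists>x. \<forall>i<t. \<forall>j<m i. \<forall>k<m i. \<phi> x i j k = M i j k)) \<and>
     (\<forall>x. (\<forall>i<t. \<forall>j<m i. \<forall>k<m i. \<phi> x i j k = \<zero>\<^bsub>K i\<^esub>) \<longleftrightarrow> x \<in> jacobson_rad)"

end

theory Submission
  imports Defs
begin

text \<open>Let \<open>f\<close> map \<open>R\<close> onto \<open>soc(R)\<close> with kernel \<open>rad(R)\<close>, and let \<open>\<psi>(f w)\<close> be the product over the
  Wedderburn--Artin components of \<open>1 - \<omega>\<^sub>i(tr w\<^sub>i)\<close>, where \<open>\<omega>\<^sub>i\<close> is the homogeneous weight of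
  the \<open>i\<close>-th field; put \<open>\<psi> = 0\<close> off the socle.  Every nonzero \<open>Rx\<close> contains a nonzero socle
  element whose left multiples move one trace coordinate through a whole field, so \<open>\<psi>\<close> sums to
  zero over \<open>Rx\<close>; by induction on \<open>|Rx|\<close> this gives \<open>\<omega>(x) = 1 - (\<psi> averaged over the
  generators of Rx)\<close>.  As \<open>\<psi> \<le> 1\<close>, \<open>\<omega>(x) = 0\<close> forces \<open>\<psi> = 1\<close> on all generators; perturbing a
  generator by square-zero or diagonal multipliers shows that \<open>x\<close> lives in components
  \<open>(\<bbbF>\<^sub>2)\<^sup>1\<^sup>\<times>\<^sup>1\<close>, and a single such component would give \<open>\<psi> = -1\<close>.  Conversely the idempotent
  \<open>e\<close> supported on \<open>k\<close> such components is the only generator of \<open>Re\<close>, so \<open>\<omega>(e) = 1 - (-1)\<^sup>k\<close>.\<close>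

lemma principal_left_ideal_iff: "y \<in> principal_left_ideal x \<longleftrightarrow> (\<exists>r. y = r * x)"
  unfolding principal_left_ideal_def by auto

lemma principal_left_ideal_self: "x \<in> principal_left_ideal x"
  unfolding principal_left_ideal_iff by (rule exI[of _ 1]) simp

lemma principal_left_ideal_mult:
  assumes "y \<in> principal_left_ideal x"
  shows "r * y \<in> principal_left_ideal x"
proof -
  obtain s where "y = s * x" using assms unfolding principal_left_ideal_iff by blast
  then have "r * y = (r * s) * x" by (simp add: mult.assoc)
  then show ?thesis unfolding principal_left_ideal_iff by blast
qed

lemma principal_left_ideal_add:
  assumes "y \<in> principal_left_ideal x" "z \<in> principal_left_ideal x"
  shows "y + z \<in> principal_left_ideal x"
proof -
  obtain s s' where "y = s * x" "z = s' * x" using assms unfolding principal_left_ideal_iff by blast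
  then have "y + z = (s + s') * x" by (simp add: distrib_right)
  then show ?thesis unfolding principal_left_ideal_iff by blast
qed

lemma principal_left_ideal_diff:
  assumes "y \<in> principal_left_ideal x" "z \<in> principal_left_ideal x"
  shows "y - z \<in> principal_left_ideal x"
proof -
  obtain s s' where "y = s * x" "z = s' * x" using assms unfolding principal_left_ideal_iff by blast
  then have "y - z = (s - s') * x" by (simp add: left_diff_distrib)
  then show ?thesis unfolding principal_left_ideal_iff by blast
qed

lemma principal_left_ideal_subset:
  "y \<in> principal_left_ideal x \<Longrightarrow> principal_left_ideal y \<subseteq> principal_left_ideal x"
proof
  fix z assume "y \<in> principal_left_ideal x" "z \<in> principal_left_ideal y"
  moreover obtain r where "z = r * y"
    using \<open>z \<in> principal_left_ideal y\<close> unfolding principal_left_ideal_iff by blast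
  ultimately show "z \<in> principal_left_ideal x" using principal_left_ideal_mult by simp
qed

lemma principal_left_ideal_eqI:
  "y \<in> principal_left_ideal x \<Longrightarrow> x \<in> principal_left_ideal y \<Longrightarrow>
   principal_left_ideal y = principal_left_ideal x"
  by (intro subset_antisym principal_left_ideal_subset)

lemma principal_left_ideal_zero: "principal_left_ideal 0 = {0}"
  unfolding principal_left_ideal_def by auto

lemma left_ideal_principal_left_ideal: "left_ideal (principal_left_ideal x)"
proof -
  have "0 \<in> principal_left_ideal x"
    using principal_left_ideal_mult[OF principal_left_ideal_self, of 0] by simp
  then show ?thesis
    unfolding left_ideal_def using principal_left_ideal_add principal_left_ideal_mult by blast
qed

lemma left_ideal_meets_left_socle:
  assumes fin: "finite (UNIV :: 'a::ring_1 set)"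
    and I: "left_ideal (I :: 'a set)" "I \<noteq> {0}"
  obtains y where "y \<in> I" "y \<in> left_socle" "y \<noteq> 0"
proof -
  define L where "L = {J :: 'a set. left_ideal J \<and> J \<noteq> {0} \<and> J \<subseteq> I}"
  have "I \<in> L" unfolding L_def using I by auto
  then obtain J where J: "J \<in> L" and J_least: "\<And>J'. J' \<in> L \<Longrightarrow> card J \<le> card J'"
    using ex_has_least_nat[of "\<lambda>J. J \<in> L" I card] by auto
  have "minimal_left_ideal J"
    unfolding minimal_left_ideal_def
  proof (intro conjI allI impI)
    show "left_ideal J" "J \<noteq> {0}" using J unfolding L_def by auto
  next
    fix J' assume J': "left_ideal J' \<and> J' \<subseteq> J"
    show "J' = {0} \<or> J' = J"
    proof (cases "J' = {0}")
      case False
      then have "J' \<in> L" using J J' unfolding L_def by auto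
      then have "card J \<le> card J'" by (rule J_least)
      then show ?thesis
        using J' card_seteq[OF finite_subset[OF subset_UNIV fin]] by blast
    qed simp
  qed
  then have "J \<subseteq> left_socle" unfolding left_socle_def by auto
  moreover obtain y where "y \<in> J" "y \<noteq> 0"
    using J unfolding L_def left_ideal_def by auto
  ultimately show ?thesis using that J unfolding L_def by blast
qed

definition assoc_class :: "'a::ring_1 \<Rightarrow> 'a set" where
  "assoc_class x = {y. principal_left_ideal y = principal_left_ideal x}"

definition class_average :: "('a::ring_1 \<Rightarrow> real) \<Rightarrow> 'a \<Rightarrow> real" where
  "class_average \<psi> x = (\<Sum>y\<in>assoc_class x. \<psi> y) / real (card (assoc_class x))"

lemma assoc_class_self: "x \<in> assoc_class x"
  unfolding assoc_class_def by simp

lemma assoc_class_eq: "y \<in> assoc_class x \<Longrightarrow> assoc_class y = assoc_class x"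
  unfolding assoc_class_def by simp

lemma assoc_class_sym: "y \<in> assoc_class x \<longleftrightarrow> x \<in> assoc_class y"
  unfolding assoc_class_def by auto

lemma assoc_class_subset: "assoc_class x \<subseteq> principal_left_ideal x"
  unfolding assoc_class_def using principal_left_ideal_self by auto

lemma assoc_class_zero: "assoc_class 0 = {0}"
  unfolding assoc_class_def using principal_left_ideal_self principal_left_ideal_zero by auto

lemma class_average_cong: "y \<in> assoc_class x \<Longrightarrow> class_average \<psi> y = class_average \<psi> x"
  unfolding class_average_def by (simp add: assoc_class_eq)

lemma add_mult_in_assoc_class:
  fixes n y :: "'a::ring_1"
  assumes "n * n * y = 0"
  shows "y + n * y \<in> assoc_class y"
proof -
  have "(1 - n) * (y + n * y) = y - n * n * y" by (simp add: algebra_simps)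
  then have "y = (1 - n) * (y + n * y)" using assms by simp
  then have "y \<in> principal_left_ideal (y + n * y)"
    unfolding principal_left_ideal_iff by blast
  moreover have "y + n * y = (1 + n) * y" by (simp add: algebra_simps)
  then have "y + n * y \<in> principal_left_ideal y"
    unfolding principal_left_ideal_iff by blast
  ultimately show ?thesis unfolding assoc_class_def using principal_left_ideal_eqI by blast
qed

lemma mult_in_assoc_class:
  fixes r s y :: "'a::ring_1"
  assumes "s * (r * y) = y"
  shows "r * y \<in> assoc_class y"
proof -
  have "y \<in> principal_left_ideal (r * y)"
    using assms[symmetric] unfolding principal_left_ideal_iff by blast
  moreover have "r * y \<in> principal_left_ideal y"
    unfolding principal_left_ideal_iff by blast
  ultimately show ?thesis unfolding assoc_class_def using principal_left_ideal_eqI by blast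
qed

context
  assumes fin: "finite (UNIV :: 'a::ring_1 set)"
begin

lemma finite_principal_left_ideal: "finite (principal_left_ideal (x :: 'a))"
  using fin by (rule finite_subset[OF subset_UNIV])

lemma finite_assoc_class: "finite (assoc_class (x :: 'a))"
  using fin by (rule finite_subset[OF subset_UNIV])

lemma card_assoc_class_pos: "card (assoc_class (x :: 'a)) > 0"
  using finite_assoc_class assoc_class_self card_gt_0_iff by blast

text \<open>A principal left ideal is a disjoint union of association classes, so averaging over
  classes does not change the sum over it.\<close>
lemma sum_class_average:
  "(\<Sum>y\<in>principal_left_ideal x. class_average \<psi> y) = (\<Sum>y\<in>principal_left_ideal (x :: 'a). \<psi> y)"
proof -
  let ?A = "principal_left_ideal x"
  let ?c = "\<lambda>y. real (card (assoc_class y))"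
  have in_A: "?A \<inter> assoc_class y = assoc_class y" if "y \<in> ?A" for y
    using assoc_class_subset principal_left_ideal_subset[OF that] by blast
  have "(\<Sum>y\<in>?A. class_average \<psi> y) = (\<Sum>y\<in>?A. \<Sum>z\<in>?A. if z \<in> assoc_class y then \<psi> z / ?c y else 0)"
    by (intro sum.cong refl)
      (simp add: sum.inter_restrict[OF finite_principal_left_ideal, symmetric] in_A
        class_average_def sum_divide_distrib)
  also have "\<dots> = (\<Sum>z\<in>?A. \<Sum>y\<in>?A. if y \<in> assoc_class z then \<psi> z / ?c z else 0)"
    by (subst sum.swap) (intro sum.cong refl, metis assoc_class_eq assoc_class_sym)
  also have "\<dots> = (\<Sum>z\<in>?A. \<psi> z)"
    using card_assoc_class_pos
    by (intro sum.cong refl) (simp add: sum.inter_restrict[OF finite_principal_left_ideal, symmetric]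
        in_A)
  finally show ?thesis .
qed

text \<open>Both sides are constant on association classes and have the same sum over every principal
  left ideal, so they agree by induction on the size of the ideal.\<close>
lemma normalized_homogeneous_weight_eq:
  assumes \<omega>: "normalized_homogeneous_weight \<omega>"
    and \<psi>0: "\<psi> 0 = 1" and \<psi>_orth: "\<And>x. x \<noteq> 0 \<Longrightarrow> (\<Sum>y\<in>principal_left_ideal x. \<psi> y) = 0"
  shows "\<omega> x = 1 - class_average \<psi> (x :: 'a)"
proof -
  note \<omega>_def = \<omega>[unfolded normalized_homogeneous_weight_def]
  have \<omega>0: "\<omega> 0 = 0" using \<omega>_def by (rule conjunct1)
  have \<omega>_inv: "\<And>x y. principal_left_ideal x = principal_left_ideal y \<Longrightarrow> \<omega> x = \<omega> y"
    using \<omega>_def by blast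
  have \<omega>_sum: "\<And>x. x \<noteq> 0 \<Longrightarrow> (\<Sum>y\<in>principal_left_ideal x. \<omega> y) = real (card (principal_left_ideal x))"
    using \<omega>_def by blast
  define d where "d y = \<omega> y - 1 + class_average \<psi> y" for y
  have "d x = 0"
  proof (induction "card (principal_left_ideal x)" arbitrary: x rule: less_induct)
    case less
    show ?case
    proof (cases "x = 0")
      case True
      then show ?thesis by (simp add: d_def class_average_def assoc_class_zero \<omega>0 \<psi>0)
    next
      case False
      let ?A = "principal_left_ideal x"
      have "(\<Sum>y\<in>?A. d y) = (\<Sum>y\<in>?A. \<omega> y) - real (card ?A) + (\<Sum>y\<in>?A. class_average \<psi> y)"
        unfolding d_def by (simp add: sum.distrib sum_subtractf)
      also have "\<dots> = 0"
        using \<omega>_sum[OF False] \<psi>_orth[OF False] sum_class_average by simp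
      finally have "(\<Sum>y\<in>?A. d y) = 0" .
      moreover have "(\<Sum>y\<in>?A - assoc_class x. d y) = 0"
      proof (rule sum.neutral, rule ballI)
        fix y assume "y \<in> ?A - assoc_class x"
        then have "principal_left_ideal y \<subset> ?A"
          using principal_left_ideal_subset unfolding assoc_class_def by auto
        then have "card (principal_left_ideal y) < card ?A"
          by (rule psubset_card_mono[OF finite_principal_left_ideal])
        then show "d y = 0" by (rule less)
      qed
      moreover have "(\<Sum>y\<in>assoc_class x. d y) = (\<Sum>y\<in>assoc_class x. d x)"
      proof (rule sum.cong[OF refl])
        fix y assume y: "y \<in> assoc_class x"
        then have "\<omega> y = \<omega> x" using \<omega>_inv[of y x] unfolding assoc_class_def by simp
        then show "d y = d x" unfolding d_def using class_average_cong[OF y] by simp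
      qed
      ultimately have "real (card (assoc_class x)) * d x = 0"
        using sum.subset_diff[OF assoc_class_subset finite_principal_left_ideal, of d x] by simp
      then show ?thesis using card_assoc_class_pos[of x] by simp
    qed
  qed
  then show ?thesis unfolding d_def by simp
qed

lemma class_average_eq_1D:
  assumes "class_average \<psi> x = 1" "\<And>y. \<psi> y \<le> 1" "y \<in> assoc_class (x :: 'a)"
  shows "\<psi> y = 1"
proof -
  have "(\<Sum>z\<in>assoc_class x. 1 - \<psi> z) = 0"
    using assms(1) card_assoc_class_pos[of x] by (simp add: class_average_def sum_subtractf)
  moreover have "\<And>z. 0 \<le> 1 - \<psi> z" using assms(2) by simp
  ultimately have "\<forall>z\<in>assoc_class x. 1 - \<psi> z = 0"
    using sum_nonneg_eq_0_iff[OF finite_assoc_class[of x], where f="\<lambda>z. 1 - \<psi> z"] by simp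
  then show ?thesis using assms(3) by simp
qed

end

text \<open>\<open>coweight F\<close> is \<open>1\<close> minus the normalized homogeneous weight of the finite field \<open>F\<close>.\<close>
definition coweight :: "('c, 'm) ring_scheme \<Rightarrow> 'c \<Rightarrow> real" where
  "coweight F c = (if c = \<zero>\<^bsub>F\<^esub> then 1 else -1 / (real (card (carrier F)) - 1))"

context field
begin

lemma card_carrier_ge_2: "finite (carrier R) \<Longrightarrow> card (carrier R) \<ge> 2"
  using card_mono[of "carrier R" "{\<zero>, \<one>}"] by simp

lemma carrier_eq_zero_one: "finite (carrier R) \<Longrightarrow> card (carrier R) = 2 \<Longrightarrow> carrier R = {\<zero>, \<one>}"
  using card_seteq[of "carrier R" "{\<zero>, \<one>}"] by simp

lemma abs_coweight_le_1: "finite (carrier R) \<Longrightarrow> \<bar>coweight R c\<bar> \<le> 1"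
  using card_carrier_ge_2 by (simp add: coweight_def abs_div)

lemma sum_coweight: "finite (carrier R) \<Longrightarrow> (\<Sum>c\<in>carrier R. coweight R c) = 0"
  using card_carrier_ge_2
  by (simp add: sum.remove[of _ \<zero>] coweight_def card_Diff_singleton of_nat_diff)

lemma sum_coweight_shift:
  assumes "finite (carrier R)" "u \<in> carrier R"
  shows "(\<Sum>c\<in>carrier R. coweight R (u \<oplus> c)) = 0"
proof -
  have "bij_betw (\<lambda>c. u \<oplus> c) (carrier R) (carrier R)"
    by (rule bij_betwI[where g="\<lambda>c. \<ominus> u \<oplus> c"])
      (use assms(2) in \<open>auto simp: a_assoc[symmetric] l_neg r_neg\<close>)
  then have "(\<Sum>c\<in>carrier R. coweight R (u \<oplus> c)) = (\<Sum>c\<in>carrier R. coweight R c)"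
    by (rule sum.reindex_bij_betw)
  then show ?thesis using sum_coweight[OF assms(1)] by simp
qed

end

locale frobenius_wedderburn_artin =
  fixes t :: nat and q m :: "nat \<Rightarrow> nat" and K :: "nat \<Rightarrow> 'c ring"
    and \<phi> :: "'a::ring_1 \<Rightarrow> nat \<Rightarrow> nat \<Rightarrow> nat \<Rightarrow> 'c"
    and f :: "'a \<Rightarrow> 'a"
  assumes wedderburn_artin: "wedderburn_artin t q m K \<phi>"
    and finite_ring: "finite (UNIV :: 'a set)"
    and f_add: "\<And>x y. f (x + y) = f x + f y"
    and f_mult: "\<And>r x. f (r * x) = r * f x"
    and range_f: "range f = left_socle"
    and kernel_f: "{x. f x = 0} = jacobson_rad"
begin

lemma field_K: "i < t \<Longrightarrow> field (K i)"
  and finite_K: "i < t \<Longrightarrow> finite (carrier (K i))"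
  and card_K: "i < t \<Longrightarrow> card (carrier (K i)) = q i"
  and m_pos: "i < t \<Longrightarrow> m i \<ge> 1"
  using wedderburn_artin[unfolded wedderburn_artin_def, THEN conjunct1] by auto

lemma ring_K: "i < t \<Longrightarrow> ring (K i)"
  using field_K by (simp add: cring.axioms(1) domain.axioms(1) field.axioms(1))

lemma q_ge_2: "i < t \<Longrightarrow> q i \<ge> 2"
  using field.card_carrier_ge_2[OF field_K finite_K] card_K by simp

definition F2_components :: "nat set" where
  "F2_components = {i. i < t \<and> q i = 2 \<and> m i = 1}"

lemma finite_F2_components: "finite F2_components"
  by (simp add: F2_components_def)

lemma phi_in_carrier: "i < t \<Longrightarrow> j < m i \<Longrightarrow> k < m i \<Longrightarrow> \<phi> x i j k \<in> carrier (K i)"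
  and phi_add: "i < t \<Longrightarrow> j < m i \<Longrightarrow> k < m i \<Longrightarrow>
    \<phi> (x + y) i j k = \<phi> x i j k \<oplus>\<^bsub>K i\<^esub> \<phi> y i j k"
  and phi_mult: "i < t \<Longrightarrow> j < m i \<Longrightarrow> k < m i \<Longrightarrow>
    \<phi> (x * y) i j k = (\<Oplus>\<^bsub>K i\<^esub> l\<in>{..<m i}. \<phi> x i j l \<otimes>\<^bsub>K i\<^esub> \<phi> y i l k)"
  and phi_surj: "(\<And>i j k. i < t \<Longrightarrow> j < m i \<Longrightarrow> k < m i \<Longrightarrow> M i j k \<in> carrier (K i)) \<Longrightarrow>
    \<exists>x. \<forall>i<t. \<forall>j<m i. \<forall>k<m i. \<phi> x i j k = M i j k"
  and phi_eq_zero_iff_rad: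
    "(\<forall>i<t. \<forall>j<m i. \<forall>k<m i. \<phi> x i j k = \<zero>\<^bsub>K i\<^esub>) \<longleftrightarrow> x \<in> jacobson_rad"
  using wedderburn_artin[unfolded wedderburn_artin_def, THEN conjunct2] by simp_all

lemma phi_eq_zero_iff: "(\<forall>i<t. \<forall>j<m i. \<forall>k<m i. \<phi> x i j k = \<zero>\<^bsub>K i\<^esub>) \<longleftrightarrow> f x = 0"
  using phi_eq_zero_iff_rad kernel_f by blast

lemma f_zero: "f 0 = 0"
  using f_add[of 0 0] by simp

lemma f_diff: "f (x - y) = f x - f y"
  using f_add[of "x - y" y] by (simp add: eq_diff_eq)

lemma phi_zero: "i < t \<Longrightarrow> j < m i \<Longrightarrow> k < m i \<Longrightarrow> \<phi> 0 i j k = \<zero>\<^bsub>K i\<^esub>"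
  using phi_eq_zero_iff[of 0] f_zero by simp

lemma phi_eq_iff: "(\<forall>i<t. \<forall>j<m i. \<forall>k<m i. \<phi> w i j k = \<phi> w' i j k) \<longleftrightarrow> f w = f w'"
proof -
  have "\<phi> (w - w') i j k = \<zero>\<^bsub>K i\<^esub> \<longleftrightarrow> \<phi> w i j k = \<phi> w' i j k"
    if ijk: "i < t" "j < m i" "k < m i" for i j k
  proof -
    interpret ring "K i" using ring_K ijk by blast
    have "\<phi> w i j k = \<phi> (w - w') i j k \<oplus>\<^bsub>K i\<^esub> \<phi> w' i j k"
      using phi_add[OF ijk, of "w - w'" w'] by simp
    then show ?thesis using add.r_cancel_one[OF phi_in_carrier[OF ijk] phi_in_carrier[OF ijk]]
      by simp
  qed
  then have "(\<forall>i<t. \<forall>j<m i. \<forall>k<m i. \<phi> w i j k = \<phi> w' i j k) \<longleftrightarrow> f (w - w') = 0"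
    unfolding phi_eq_zero_iff[symmetric] by blast
  then show ?thesis by (simp add: f_diff)
qed

lemma range_f_add: "y \<in> range f \<Longrightarrow> z \<in> range f \<Longrightarrow> y + z \<in> range f"
  by (auto simp flip: f_add)

lemma range_f_diff: "y \<in> range f \<Longrightarrow> z \<in> range f \<Longrightarrow> y - z \<in> range f"
  by (auto simp flip: f_diff)

definition lift :: "(nat \<Rightarrow> nat \<Rightarrow> nat \<Rightarrow> 'c) \<Rightarrow> 'a" where
  "lift M = (SOME x. \<forall>i<t. \<forall>j<m i. \<forall>k<m i. \<phi> x i j k = M i j k)"

lemma phi_lift:
  assumes "\<And>i j k. i < t \<Longrightarrow> j < m i \<Longrightarrow> k < m i \<Longrightarrow> M i j k \<in> carrier (K i)"
    and "i < t" "j < m i" "k < m i"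
  shows "\<phi> (lift M) i j k = M i j k"
proof -
  have "\<forall>i<t. \<forall>j<m i. \<forall>k<m i. \<phi> (lift M) i j k = M i j k"
    unfolding lift_def by (rule someI_ex[OF phi_surj[OF assms(1)]])
  then show ?thesis using assms(2-4) by blast
qed

definition unit_at :: "nat \<Rightarrow> nat \<Rightarrow> nat \<Rightarrow> 'c \<Rightarrow> 'a" where
  "unit_at i p p' \<gamma> = lift (\<lambda>i' j k. if i' = i \<and> j = p \<and> k = p' then \<gamma> else \<zero>\<^bsub>K i'\<^esub>)"

lemma phi_unit_at:
  assumes "\<gamma> \<in> carrier (K i)" "i' < t" "j < m i'" "k < m i'"
  shows "\<phi> (unit_at i p p' \<gamma>) i' j k = (if i' = i \<and> j = p \<and> k = p' then \<gamma> else \<zero>\<^bsub>K i'\<^esub>)"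
  unfolding unit_at_def using assms ring.ring_simprules(2)[OF ring_K]
  by (intro phi_lift) auto

lemma phi_mult_zero_row:
  assumes ijk: "i < t" "j < m i" "k < m i" and "\<And>l. l < m i \<Longrightarrow> \<phi> r i j l = \<zero>\<^bsub>K i\<^esub>"
  shows "\<phi> (r * w) i j k = \<zero>\<^bsub>K i\<^esub>"
proof -
  interpret ring "K i" using ring_K ijk by blast
  have "\<phi> (r * w) i j k = (\<Oplus>\<^bsub>K i\<^esub> l\<in>{..<m i}. \<zero>\<^bsub>K i\<^esub>)"
    unfolding phi_mult[OF ijk] by (rule finsum_cong') (use assms phi_in_carrier in auto)
  then show ?thesis by simp
qed

lemma phi_mult_zero_col:
  assumes ijk: "i < t" "j < m i" "k < m i" and "\<And>l. l < m i \<Longrightarrow> \<phi> w i l k = \<zero>\<^bsub>K i\<^esub>"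
  shows "\<phi> (r * w) i j k = \<zero>\<^bsub>K i\<^esub>"
proof -
  interpret ring "K i" using ring_K ijk by blast
  have "\<phi> (r * w) i j k = (\<Oplus>\<^bsub>K i\<^esub> l\<in>{..<m i}. \<zero>\<^bsub>K i\<^esub>)"
    unfolding phi_mult[OF ijk] by (rule finsum_cong') (use assms phi_in_carrier in auto)
  then show ?thesis by simp
qed

lemma phi_mult_1x1:
  assumes "i < t" "m i = 1"
  shows "\<phi> (r * w) i 0 0 = \<phi> r i 0 0 \<otimes>\<^bsub>K i\<^esub> \<phi> w i 0 0"
proof -
  interpret ring "K i" using ring_K assms by blast
  have "{..<m i} = {0}" using assms by auto
  then show ?thesis using phi_mult[OF assms(1), of 0 0 r w] assms phi_in_carrier[OF assms(1)] by simp
qed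

context
  fixes i p p' \<gamma>
  assumes i: "i < t" and p: "p < m i" and p': "p' < m i" and \<gamma>: "\<gamma> \<in> carrier (K i)"
begin

lemma phi_unit_at_mult:
  assumes jk: "j < m i" "k < m i"
  shows "\<phi> (unit_at i p p' \<gamma> * z) i j k = (if j = p then \<gamma> \<otimes>\<^bsub>K i\<^esub> \<phi> z i p' k else \<zero>\<^bsub>K i\<^esub>)"
proof -
  interpret ring "K i" using ring_K i by blast
  have "\<phi> (unit_at i p p' \<gamma> * z) i j k = (\<Oplus>\<^bsub>K i\<^esub> l\<in>{..<m i}. if l = p' then
          (if j = p then \<gamma> \<otimes>\<^bsub>K i\<^esub> \<phi> z i l k else \<zero>\<^bsub>K i\<^esub>) else \<zero>\<^bsub>K i\<^esub>)"
    unfolding phi_mult[OF i jk]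
    by (rule finsum_cong') (use phi_unit_at[OF \<gamma> i] phi_in_carrier[OF i] \<gamma> jk in auto)
  also have "\<dots> = (if j = p then \<gamma> \<otimes>\<^bsub>K i\<^esub> \<phi> z i p' k else \<zero>\<^bsub>K i\<^esub>)"
    by (rule add.finprod_singleton_swap) (use p' phi_in_carrier[OF i] jk \<gamma> in auto)
  finally show ?thesis .
qed

lemma phi_unit_at_mult_other:
  "i' < t \<Longrightarrow> i' \<noteq> i \<Longrightarrow> j < m i' \<Longrightarrow> k < m i' \<Longrightarrow> \<phi> (unit_at i p p' \<gamma> * z) i' j k = \<zero>\<^bsub>K i'\<^esub>"
  by (rule phi_mult_zero_row) (auto simp: phi_unit_at[OF \<gamma>])

lemma f_unit_at_square_mult: "p \<noteq> p' \<Longrightarrow> f (unit_at i p p' \<gamma> * unit_at i p p' \<gamma> * z) = 0"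
proof -
  assume pp': "p \<noteq> p'"
  let ?n = "unit_at i p p' \<gamma>"
  have "\<phi> (?n * ?n) i' j k = \<zero>\<^bsub>K i'\<^esub>" if "i' < t" "j < m i'" "k < m i'" for i' j k
  proof (cases "i' = i")
    case True
    interpret ring "K i" using ring_K i by blast
    have "\<phi> ?n i p' k = \<zero>\<^bsub>K i\<^esub>" using phi_unit_at[OF \<gamma> i p'] that True pp' by auto
    then show ?thesis using phi_unit_at_mult[of j k ?n] that True \<gamma> by auto
  qed (use phi_unit_at_mult_other that in blast)
  then have "\<phi> (?n * ?n * z) i' j k = \<zero>\<^bsub>K i'\<^esub>" if "i' < t" "j < m i'" "k < m i'" for i' j k
    using phi_mult_zero_row that by blast
  then show ?thesis using phi_eq_zero_iff by blast
qed

end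

definition trace :: "nat \<Rightarrow> 'a \<Rightarrow> 'c" where
  "trace i w = (\<Oplus>\<^bsub>K i\<^esub> j\<in>{..<m i}. \<phi> w i j j)"

lemma trace_in_carrier: "i < t \<Longrightarrow> trace i w \<in> carrier (K i)"
proof -
  assume i: "i < t"
  interpret ring "K i" using ring_K i by blast
  show ?thesis unfolding trace_def by (rule finsum_closed) (use phi_in_carrier i in auto)
qed

lemma trace_add: "i < t \<Longrightarrow> trace i (w + w') = trace i w \<oplus>\<^bsub>K i\<^esub> trace i w'"
proof -
  assume i: "i < t"
  interpret ring "K i" using ring_K i by blast
  have "trace i (w + w') = (\<Oplus>\<^bsub>K i\<^esub> j\<in>{..<m i}. \<phi> w i j j \<oplus>\<^bsub>K i\<^esub> \<phi> w' i j j)"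
    unfolding trace_def by (rule finsum_cong') (use phi_in_carrier[OF i] phi_add[OF i] in auto)
  also have "\<dots> = trace i w \<oplus>\<^bsub>K i\<^esub> trace i w'"
    unfolding trace_def by (rule finsum_addf) (use phi_in_carrier[OF i] in auto)
  finally show ?thesis .
qed

lemma trace_cong: "i < t \<Longrightarrow> f w = f w' \<Longrightarrow> trace i w = trace i w'"
proof -
  assume i: "i < t" and "f w = f w'"
  then have "\<forall>j<m i. \<phi> w i j j = \<phi> w' i j j" using phi_eq_iff by blast
  interpret ring "K i" using ring_K i by blast
  show ?thesis unfolding trace_def
    by (rule finsum_cong') (use \<open>\<forall>j<m i. _\<close> phi_in_carrier i in auto)
qed

lemma trace_eq_zero:
  assumes i: "i < t" and "\<And>j k. j < m i \<Longrightarrow> k < m i \<Longrightarrow> \<phi> w i j k = \<zero>\<^bsub>K i\<^esub>"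
  shows "trace i w = \<zero>\<^bsub>K i\<^esub>"
proof -
  interpret ring "K i" using ring_K i by blast
  have "trace i w = (\<Oplus>\<^bsub>K i\<^esub> j\<in>{..<m i}. \<zero>\<^bsub>K i\<^esub>)"
    unfolding trace_def by (rule finsum_cong') (use assms in auto)
  then show ?thesis by simp
qed

lemma trace_1x1: "i < t \<Longrightarrow> m i = 1 \<Longrightarrow> trace i w = \<phi> w i 0 0"
proof -
  assume i: "i < t" "m i = 1"
  interpret ring "K i" using ring_K i by blast
  have "{..<m i} = {0}" using i by auto
  then show ?thesis unfolding trace_def using i phi_in_carrier[OF i(1)] by simp
qed

lemma trace_unit_at_mult:
  assumes "i < t" "p < m i" "p' < m i" "\<gamma> \<in> carrier (K i)"
  shows "trace i (unit_at i p p' \<gamma> * z) = \<gamma> \<otimes>\<^bsub>K i\<^esub> \<phi> z i p' p"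
proof -
  interpret ring "K i" using ring_K assms by blast
  have "trace i (unit_at i p p' \<gamma> * z) =
      (\<Oplus>\<^bsub>K i\<^esub> j\<in>{..<m i}. if j = p then \<gamma> \<otimes>\<^bsub>K i\<^esub> \<phi> z i p' j else \<zero>\<^bsub>K i\<^esub>)"
    unfolding trace_def
    by (rule finsum_cong') (use phi_unit_at_mult[OF assms] phi_in_carrier[OF assms(1)] assms in auto)
  also have "\<dots> = \<gamma> \<otimes>\<^bsub>K i\<^esub> \<phi> z i p' p"
    by (rule add.finprod_singleton_swap) (use phi_in_carrier[OF assms(1)] assms in auto)
  finally show ?thesis .
qed

lemma trace_unit_at_mult_other:
  assumes "i < t" "p < m i" "p' < m i" "\<gamma> \<in> carrier (K i)" "i' < t" "i' \<noteq> i"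
  shows "trace i' (unit_at i p p' \<gamma> * z) = \<zero>\<^bsub>K i'\<^esub>"
  using assms by (intro trace_eq_zero phi_unit_at_mult_other)

definition Psi :: "'a \<Rightarrow> real" where
  "Psi w = (\<Prod>i<t. coweight (K i) (trace i w))"

text \<open>\<open>Psi\<close> only depends on \<open>w\<close> modulo \<open>rad(R)\<close>; \<open>psi\<close> transports it to \<open>soc(R)\<close> along
  \<open>f\<close> and vanishes off the socle.\<close>
definition psi :: "'a \<Rightarrow> real" where
  "psi y = (if y \<in> range f then Psi (inv_into UNIV f y) else 0)"

lemma Psi_cong: "f w = f w' \<Longrightarrow> Psi w = Psi w'"
  unfolding Psi_def by (intro prod.cong refl) (simp add: trace_cong[of _ w w'])

lemma psi_f: "psi (f w) = Psi w"
proof -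
  have "f (inv_into UNIV f (f w)) = f w" by (simp add: f_inv_into_f)
  from Psi_cong[OF this] show ?thesis unfolding psi_def by simp
qed

lemma psi_outside_range: "y \<notin> range f \<Longrightarrow> psi y = 0"
  unfolding psi_def by simp

lemma Psi_remove:
  "i < t \<Longrightarrow> Psi w = coweight (K i) (trace i w) * (\<Prod>i'\<in>{..<t} - {i}. coweight (K i') (trace i' w))"
  unfolding Psi_def by (rule prod.remove) auto

lemma abs_prod_coweight_le_1:
  assumes "A \<subseteq> {..<t}"
  shows "\<bar>\<Prod>i\<in>A. coweight (K i) (trace i w)\<bar> \<le> 1"
proof -
  have "(\<Prod>i\<in>A. \<bar>coweight (K i) (trace i w)\<bar>) \<le> (\<Prod>i\<in>A. 1)"
    by (rule prod_mono) (use assms field.abs_coweight_le_1[OF field_K finite_K] in auto)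
  then show ?thesis by (simp add: abs_prod)
qed

lemma psi_le_1: "psi y \<le> 1"
  using abs_prod_coweight_le_1[of "{..<t}"] unfolding psi_def Psi_def by (auto simp: abs_le_iff)

lemma psi_zero: "psi 0 = 1"
proof -
  have "trace i 0 = \<zero>\<^bsub>K i\<^esub>" if "i < t" for i
    using that by (intro trace_eq_zero) (auto simp: phi_zero)
  then show ?thesis using psi_f[of 0] f_zero by (simp add: Psi_def coweight_def)
qed

lemma obtain_trace_shift:
  assumes "f w \<noteq> 0"
  obtains i0 N where "i0 < t"
    and "\<And>c. c \<in> carrier (K i0) \<Longrightarrow> trace i0 (N c * w) = c"
    and "\<And>c i. c \<in> carrier (K i0) \<Longrightarrow> i < t \<Longrightarrow> i \<noteq> i0 \<Longrightarrow> trace i (N c * w) = \<zero>\<^bsub>K i\<^esub>"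
proof -
  obtain i0 l k where lk: "i0 < t" "l < m i0" "k < m i0" and a: "\<phi> w i0 l k \<noteq> \<zero>\<^bsub>K i0\<^esub>"
    using assms phi_eq_zero_iff by blast
  interpret field "K i0" using field_K lk by blast
  have a_unit: "\<phi> w i0 l k \<in> Units (K i0)"
    using a phi_in_carrier[OF lk] field_Units by auto
  define N where "N c = unit_at i0 k l (c \<otimes>\<^bsub>K i0\<^esub> inv\<^bsub>K i0\<^esub> \<phi> w i0 l k)" for c
  show thesis
  proof (rule that[of i0 N])
    fix c assume c: "c \<in> carrier (K i0)"
    have "trace i0 (N c * w) = c \<otimes>\<^bsub>K i0\<^esub> inv\<^bsub>K i0\<^esub> \<phi> w i0 l k \<otimes>\<^bsub>K i0\<^esub> \<phi> w i0 l k"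
      unfolding N_def using lk c a_unit by (intro trace_unit_at_mult) auto
    then show "trace i0 (N c * w) = c"
      using c a_unit phi_in_carrier[OF lk] by (simp add: m_assoc)
    show "trace i (N c * w) = \<zero>\<^bsub>K i\<^esub>" if "i < t" "i \<noteq> i0" for i
      unfolding N_def using lk c a_unit that by (intro trace_unit_at_mult_other) auto
  qed (use lk in simp)
qed

lemma sum_Psi_trace_shift:
  assumes i0: "i0 < t"
    and tr_i0: "\<And>c. c \<in> carrier (K i0) \<Longrightarrow> trace i0 (v c) = c"
    and tr_other: "\<And>c i. c \<in> carrier (K i0) \<Longrightarrow> i < t \<Longrightarrow> i \<noteq> i0 \<Longrightarrow> trace i (v c) = \<zero>\<^bsub>K i\<^esub>"
  shows "(\<Sum>c\<in>carrier (K i0). Psi (w + v c)) = 0"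
proof -
  interpret field "K i0" using field_K i0 by blast
  define P where "P = (\<Prod>i\<in>{..<t} - {i0}. coweight (K i) (trace i w))"
  have "Psi (w + v c) = coweight (K i0) (trace i0 w \<oplus>\<^bsub>K i0\<^esub> c) * P" if c: "c \<in> carrier (K i0)" for c
  proof -
    have "trace i (w + v c) = trace i w" if "i \<in> {..<t} - {i0}" for i
      using that trace_add tr_other[OF c] ring.ring_simprules(15)[OF ring_K trace_in_carrier]
      by auto
    then have "(\<Prod>i\<in>{..<t} - {i0}. coweight (K i) (trace i (w + v c))) = P"
      unfolding P_def by (intro prod.cong refl) simp
    moreover have "trace i0 (w + v c) = trace i0 w \<oplus>\<^bsub>K i0\<^esub> c"
      using trace_add[OF i0] tr_i0[OF c] by simp
    ultimately show ?thesis unfolding Psi_remove[OF i0, of "w + v c"] by simp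
  qed
  then have "(\<Sum>c\<in>carrier (K i0). Psi (w + v c)) =
      (\<Sum>c\<in>carrier (K i0). coweight (K i0) (trace i0 w \<oplus>\<^bsub>K i0\<^esub> c)) * P"
    by (simp add: sum_distrib_right)
  then show ?thesis using sum_coweight_shift[OF finite_K[OF i0] trace_in_carrier[OF i0]] by simp
qed

text \<open>Inside every nonzero principal left ideal the socle elements \<open>f (N c * w\<^sub>1)\<close> shift one
  trace coordinate through the whole field, and \<open>coweight\<close> sums to zero over a field.\<close>
lemma sum_psi_principal_left_ideal:
  assumes "x \<noteq> 0"
  shows "(\<Sum>y\<in>principal_left_ideal x. psi y) = 0"
proof -
  let ?A = "principal_left_ideal x"
  define S where "S = ?A \<inter> range f"
  have "?A \<noteq> {0}" using assms principal_left_ideal_self by blast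
  then obtain y1 where y1: "y1 \<in> ?A" "y1 \<in> left_socle" "y1 \<noteq> 0"
    using left_ideal_meets_left_socle[OF finite_ring left_ideal_principal_left_ideal] by blast
  then obtain w1 where w1: "y1 = f w1" using range_f by blast
  obtain i0 N where i0: "i0 < t"
    and tr_i0: "\<And>c. c \<in> carrier (K i0) \<Longrightarrow> trace i0 (N c * w1) = c"
    and tr_other: "\<And>c i. c \<in> carrier (K i0) \<Longrightarrow> i < t \<Longrightarrow> i \<noteq> i0 \<Longrightarrow> trace i (N c * w1) = \<zero>\<^bsub>K i\<^esub>"
    using obtain_trace_shift y1 w1 by metis
  define T where "T c = f (N c * w1)" for c
  have T_in_S: "T c \<in> S" for c
  proof -
    have "T c = N c * y1" unfolding T_def w1 by (rule f_mult)
    moreover have "T c \<in> range f" unfolding T_def by (rule rangeI)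
    ultimately show ?thesis unfolding S_def using principal_left_ideal_mult[OF y1(1)] by auto
  qed
  have sum_A: "(\<Sum>y\<in>?A. psi y) = (\<Sum>y\<in>S. psi y)"
    by (rule sum.mono_neutral_right)
      (auto simp: S_def finite_principal_left_ideal[OF finite_ring] psi_outside_range)
  have shift: "(\<Sum>y\<in>S. psi (y + T c)) = (\<Sum>y\<in>S. psi y)" for c
  proof (rule sum.reindex_bij_betw, rule bij_betwI[where g="\<lambda>y. y - T c"])
    show "(\<lambda>y. y + T c) \<in> S \<rightarrow> S" "(\<lambda>y. y - T c) \<in> S \<rightarrow> S"
      using T_in_S[of c] principal_left_ideal_add principal_left_ideal_diff range_f_add range_f_diff
      unfolding S_def by auto
  qed auto
  have orbit: "(\<Sum>c\<in>carrier (K i0). psi (y + T c)) = 0" if "y \<in> S" for y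
  proof -
    obtain w where "y = f w" using \<open>y \<in> S\<close> unfolding S_def by blast
    then have "psi (y + T c) = Psi (w + N c * w1)" for c by (simp add: T_def flip: f_add psi_f)
    then show ?thesis using sum_Psi_trace_shift[OF i0 tr_i0 tr_other] by simp
  qed
  have "real (card (carrier (K i0))) * (\<Sum>y\<in>S. psi y) = (\<Sum>c\<in>carrier (K i0). \<Sum>y\<in>S. psi (y + T c))"
    by (simp add: shift)
  also have "\<dots> = (\<Sum>y\<in>S. \<Sum>c\<in>carrier (K i0). psi (y + T c))"
    by (rule sum.swap)
  also have "\<dots> = 0" by (simp add: orbit)
  finally show ?thesis using sum_A card_K[OF i0] q_ge_2[OF i0] by simp
qed

lemma omega_eq:
  assumes "normalized_homogeneous_weight \<omega>"
  shows "\<omega> x = 1 - class_average psi x"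
  using normalized_homogeneous_weight_eq[OF finite_ring assms psi_zero sum_psi_principal_left_ideal] .

definition scalar_at :: "nat \<Rightarrow> 'c \<Rightarrow> 'a" where
  "scalar_at i d = lift (\<lambda>i' j k. if j = k then (if i' = i then d else \<one>\<^bsub>K i'\<^esub>) else \<zero>\<^bsub>K i'\<^esub>)"

lemma phi_scalar_at:
  assumes "d \<in> carrier (K i)" "i' < t" "j < m i'" "k < m i'"
  shows "\<phi> (scalar_at i d) i' j k = (if j = k then (if i' = i then d else \<one>\<^bsub>K i'\<^esub>) else \<zero>\<^bsub>K i'\<^esub>)"
  unfolding scalar_at_def using assms ring.ring_simprules(2,6)[OF ring_K]
  by (intro phi_lift) auto

lemma phi_scalar_at_mult:
  assumes d: "d \<in> carrier (K i)" and ijk: "i' < t" "j < m i'" "k < m i'"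
  shows "\<phi> (scalar_at i d * w) i' j k = (if i' = i then d \<otimes>\<^bsub>K i'\<^esub> \<phi> w i' j k else \<phi> w i' j k)"
proof -
  interpret ring "K i'" using ring_K ijk by blast
  let ?e = "if i' = i then d else \<one>\<^bsub>K i'\<^esub>"
  have e: "?e \<in> carrier (K i')" using d by auto
  have "\<phi> (scalar_at i d * w) i' j k =
      (\<Oplus>\<^bsub>K i'\<^esub> l\<in>{..<m i'}. if l = j then ?e \<otimes>\<^bsub>K i'\<^esub> \<phi> w i' l k else \<zero>\<^bsub>K i'\<^esub>)"
    unfolding phi_mult[OF ijk]
    by (rule finsum_cong') (use e phi_scalar_at[OF d ijk(1,2)] phi_in_carrier ijk in auto)
  also have "\<dots> = ?e \<otimes>\<^bsub>K i'\<^esub> \<phi> w i' j k"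
    by (rule add.finprod_singleton_swap) (use e phi_in_carrier ijk in auto)
  finally show ?thesis using phi_in_carrier[OF ijk] by auto
qed

lemma f_scalar_at_inv_mult:
  assumes i: "i < t" and d: "d \<in> Units (K i)"
  shows "f (scalar_at i (inv\<^bsub>K i\<^esub> d) * (scalar_at i d * w)) = f w"
  unfolding phi_eq_iff[symmetric]
proof (intro allI impI)
  fix i' j k assume ijk: "i' < t" "j < m i'" "k < m i'"
  interpret ring "K i" using ring_K i by blast
  have dc: "d \<in> carrier (K i)" "inv\<^bsub>K i\<^esub> d \<in> carrier (K i)" using d by auto
  show "\<phi> (scalar_at i (inv\<^bsub>K i\<^esub> d) * (scalar_at i d * w)) i' j k = \<phi> w i' j k"
  proof (cases "i' = i")
    case True
    have "\<phi> w i j k \<in> carrier (K i)" using phi_in_carrier ijk True by simp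
    then show ?thesis
      using True d dc phi_scalar_at_mult[OF dc(1) ijk] phi_scalar_at_mult[OF dc(2) ijk]
      by (simp add: m_assoc[symmetric] Units_l_inv)
  qed (simp add: phi_scalar_at_mult[OF dc(1) ijk] phi_scalar_at_mult[OF dc(2) ijk])
qed

lemma Psi_eq_1_trace_determined:
  assumes i: "i < t" and "Psi w = 1" "Psi w' = 1"
    and others: "\<And>i'. i' < t \<Longrightarrow> i' \<noteq> i \<Longrightarrow> trace i' w = trace i' w'"
  shows "trace i w = trace i w'"
proof (rule ccontr)
  assume ne: "trace i w \<noteq> trace i w'"
  interpret field "K i" using field_K i by blast
  define P where "P = (\<Prod>i'\<in>{..<t} - {i}. coweight (K i') (trace i' w))"
  have "P = (\<Prod>i'\<in>{..<t} - {i}. coweight (K i') (trace i' w'))"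
    unfolding P_def by (rule prod.cong) (use others in auto)
  then have eq1: "coweight (K i) (trace i w) * P = 1" "coweight (K i) (trace i w') * P = 1"
    using assms Psi_remove[OF i] P_def by auto
  have "\<bar>P\<bar> \<le> 1" unfolding P_def by (rule abs_prod_coweight_le_1) auto
  have q: "real (q i) \<ge> 2" using q_ge_2 i by simp
  show False
  proof (cases "trace i w = \<zero>\<^bsub>K i\<^esub> \<or> trace i w' = \<zero>\<^bsub>K i\<^esub>")
    case True
    then have "coweight (K i) (trace i w) \<noteq> coweight (K i) (trace i w')"
      using ne q card_K[OF i] by (auto simp: coweight_def divide_simps)
    then show False using eq1 by (metis mult_cancel_right mult_zero_left zero_neq_one)
  next
    case False
    then have "\<bar>-1 / (real (q i) - 1) * P\<bar> = 1" using eq1 card_K[OF i] by (simp add: coweight_def)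
    then have "\<bar>P\<bar> = real (q i) - 1" using q by (simp add: abs_mult abs_div divide_simps)
    then have "card (carrier (K i)) = 2" using \<open>\<bar>P\<bar> \<le> 1\<close> q card_K[OF i] by linarith
    then show False using carrier_eq_zero_one[OF finite_K[OF i]] False ne
        trace_in_carrier[OF i, of w] trace_in_carrier[OF i, of w'] by auto
  qed
qed

context
  fixes z :: 'a
  assumes psi_one: "\<And>y. y \<in> assoc_class (f z) \<Longrightarrow> psi y = 1"
begin

lemma trace_determined_on_class:
  assumes "f w \<in> assoc_class (f z)" "f w' \<in> assoc_class (f z)" "i < t"
    and "\<And>i'. i' < t \<Longrightarrow> i' \<noteq> i \<Longrightarrow> trace i' w = trace i' w'"
  shows "trace i w = trace i w'"
proof -
  have "Psi w = 1" "Psi w' = 1" using psi_one assms(1,2) by (simp_all flip: psi_f)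
  then show ?thesis using Psi_eq_1_trace_determined assms(3,4) by blast
qed

text \<open>Adding \<open>E\<^sub>k\<^sub>'\<^sub>l\<^sub>' w\<close> stays in the class (\<open>E\<^sup>2 = 0\<close>) and moves the entry at \<open>(l',k')\<close>
  onto the trace.\<close>
lemma phi_offdiag_eq_zero:
  assumes w: "f w \<in> assoc_class (f z)" and i: "i < t"
    and lk: "l' < m i" "k' < m i" "l' \<noteq> k'"
  shows "\<phi> w i l' k' = \<zero>\<^bsub>K i\<^esub>"
proof -
  interpret ring "K i" using ring_K i by blast
  let ?n = "unit_at i k' l' \<one>\<^bsub>K i\<^esub>"
  have "f (?n * ?n * w) = 0" using lk i by (intro f_unit_at_square_mult) auto
  then have "f (w + ?n * w) \<in> assoc_class (f w)"
    using add_mult_in_assoc_class[of ?n "f w"] by (simp add: f_add f_mult mult.assoc)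
  then have w': "f (w + ?n * w) \<in> assoc_class (f z)" using assoc_class_eq[OF w] by simp
  have tr_n: "trace i (?n * w) = \<phi> w i l' k'"
    using trace_unit_at_mult[OF i lk(2,1), of "\<one>\<^bsub>K i\<^esub>" w] phi_in_carrier i lk by simp
  have "trace i' (w + ?n * w) = trace i' w" if "i' < t" "i' \<noteq> i" for i'
    using that trace_add trace_unit_at_mult_other[OF i lk(2,1) one_closed that]
      ring.ring_simprules(15)[OF ring_K trace_in_carrier] by simp
  then have "trace i w = trace i (w + ?n * w)"
    using trace_determined_on_class[OF w w' i] by metis
  then have "trace i w \<oplus>\<^bsub>K i\<^esub> \<phi> w i l' k' = trace i w"
    using trace_add[OF i] tr_n by simp
  then show ?thesis
    using add.l_cancel_one[OF trace_in_carrier[OF i] phi_in_carrier[OF i lk(1,2)]] by simp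
qed

text \<open>Adding \<open>E\<^sub>j\<^sub>k z\<close> for \<open>j \<noteq> k\<close> moves the diagonal entry \<open>(k,k)\<close> off the diagonal.\<close>
lemma phi_nonzero_imp_m_eq_1:
  assumes i: "i < t" and lk: "l < m i" "k < m i" and nz: "\<phi> z i l k \<noteq> \<zero>\<^bsub>K i\<^esub>"
  shows "m i = 1"
proof (rule ccontr)
  assume "m i \<noteq> 1"
  interpret ring "K i" using ring_K i by blast
  have zC: "f z \<in> assoc_class (f z)" by (rule assoc_class_self)
  have "l = k" using phi_offdiag_eq_zero[OF zC i lk] nz by blast
  define j where "j = (if k = 0 then 1 else 0 :: nat)"
  have j: "j < m i" "j \<noteq> k" using \<open>m i \<noteq> 1\<close> m_pos[OF i] lk unfolding j_def by auto
  let ?n = "unit_at i j k \<one>\<^bsub>K i\<^esub>"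
  have "f (?n * ?n * z) = 0" using j lk i by (intro f_unit_at_square_mult) auto
  then have zC': "f (z + ?n * z) \<in> assoc_class (f z)"
    using add_mult_in_assoc_class[of ?n "f z"] by (simp add: f_add f_mult mult.assoc)
  have "\<phi> (z + ?n * z) i j k = \<phi> z i j k \<oplus>\<^bsub>K i\<^esub> \<phi> z i k k"
    using phi_add[OF i j(1) lk(2)] phi_unit_at_mult[OF i j(1) lk(2) one_closed j(1) lk(2)]
      phi_in_carrier[OF i] lk by simp
  also have "\<phi> z i j k = \<zero>\<^bsub>K i\<^esub>" using phi_offdiag_eq_zero[OF zC i j(1) lk(2) j(2)] .
  finally have "\<phi> (z + ?n * z) i j k \<noteq> \<zero>\<^bsub>K i\<^esub>"
    using nz \<open>l = k\<close> phi_in_carrier[OF i lk(2,2)] by simp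
  then show False using phi_offdiag_eq_zero[OF zC' i j(1) lk(2) j(2)] by blast
qed

text \<open>Scaling component \<open>i\<close> by \<open>d \<notin> {0, 1}\<close> stays in the class but changes the trace.\<close>
lemma phi_nonzero_imp_q_eq_2:
  assumes i: "i < t" and m: "m i = 1" and nz: "\<phi> z i 0 0 \<noteq> \<zero>\<^bsub>K i\<^esub>"
  shows "q i = 2"
proof (rule ccontr)
  assume "q i \<noteq> 2"
  interpret field "K i" using field_K i by blast
  have "\<not> carrier (K i) \<subseteq> {\<zero>\<^bsub>K i\<^esub>, \<one>\<^bsub>K i\<^esub>}"
    using \<open>q i \<noteq> 2\<close> q_ge_2[OF i] card_K[OF i] card_mono[of "{\<zero>\<^bsub>K i\<^esub>, \<one>\<^bsub>K i\<^esub>}" "carrier (K i)"]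
    by (auto simp: card_insert_if)
  then obtain d where d: "d \<in> carrier (K i)" "d \<noteq> \<zero>\<^bsub>K i\<^esub>" "d \<noteq> \<one>\<^bsub>K i\<^esub>" by blast
  have dU: "d \<in> Units (K i)" using field_Units d by auto
  let ?r = "scalar_at i d"
  have zC': "f (?r * z) \<in> assoc_class (f z)"
    using mult_in_assoc_class[of "scalar_at i (inv\<^bsub>K i\<^esub> d)" ?r "f z"]
      f_scalar_at_inv_mult[OF i dU] by (simp add: f_mult)
  have z00: "\<phi> z i 0 0 \<in> carrier (K i)" using phi_in_carrier[OF i] m by simp
  have "trace i' (?r * z) = trace i' z" if i': "i' < t" "i' \<noteq> i" for i'
  proof -
    interpret K': ring "K i'" using ring_K i' by blast
    show ?thesis unfolding trace_def
      by (rule K'.finsum_cong')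
        (use i' phi_scalar_at_mult[OF d(1) i'(1)] phi_in_carrier[OF i'(1)] in auto)
  qed
  then have "trace i (?r * z) = trace i z"
    using trace_determined_on_class[OF zC' assoc_class_self i] by metis
  then have "d \<otimes>\<^bsub>K i\<^esub> \<phi> z i 0 0 = \<one>\<^bsub>K i\<^esub> \<otimes>\<^bsub>K i\<^esub> \<phi> z i 0 0"
    using trace_1x1[OF i m] phi_scalar_at_mult[OF d(1) i] m z00 by simp
  then show False using m_rcancel[OF nz z00 d(1) one_closed] d by simp
qed

lemma phi_nonzero_imp_2_1:
  assumes i: "i < t" and lk: "l < m i" "k < m i" and nz: "\<phi> z i l k \<noteq> \<zero>\<^bsub>K i\<^esub>"
  shows "q i = 2 \<and> m i = 1"
proof -
  have m: "m i = 1" using phi_nonzero_imp_m_eq_1[OF assms] .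
  then have "\<phi> z i 0 0 \<noteq> \<zero>\<^bsub>K i\<^esub>" using lk nz by simp
  then show ?thesis using phi_nonzero_imp_q_eq_2[OF i m] m by simp
qed

lemma card_binary_components_ge_2:
  assumes "f z \<noteq> 0"
  shows "card F2_components \<ge> 2"
proof (rule ccontr)
  assume "\<not> card F2_components \<ge> 2"
  obtain i0 l k where i0: "i0 < t" "l < m i0" "k < m i0" "\<phi> z i0 l k \<noteq> \<zero>\<^bsub>K i0\<^esub>"
    using assms phi_eq_zero_iff by blast
  have i0_2_1: "q i0 = 2" "m i0 = 1" using phi_nonzero_imp_2_1[OF i0] by auto
  then have "i0 \<in> F2_components" using i0 by (simp add: F2_components_def)
  moreover have "card F2_components \<le> Suc 0" using \<open>\<not> card F2_components \<ge> 2\<close> by simp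
  moreover note finite_F2_components
  ultimately have only_i0: "i = i0" if "i \<in> F2_components" for i
    using that card_le_Suc0_iff_eq[of F2_components] by blast
  have "trace i z = \<zero>\<^bsub>K i\<^esub>" if "i < t" "i \<noteq> i0" for i
  proof (rule trace_eq_zero[OF that(1)])
    fix j k assume jk: "j < m i" "k < m i"
    show "\<phi> z i j k = \<zero>\<^bsub>K i\<^esub>"
    proof (rule ccontr)
      assume "\<phi> z i j k \<noteq> \<zero>\<^bsub>K i\<^esub>"
      then have "i \<in> F2_components"
        using phi_nonzero_imp_2_1[OF that(1) jk] that(1) by (simp add: F2_components_def)
      then show False using only_i0 that(2) by blast
    qed
  qed
  then have "(\<Prod>i\<in>{..<t} - {i0}. coweight (K i) (trace i z)) = 1"
    by (intro prod.neutral) (simp add: coweight_def)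
  moreover have "trace i0 z \<noteq> \<zero>\<^bsub>K i0\<^esub>" using i0 i0_2_1 trace_1x1[OF i0(1)] by simp
  ultimately have "Psi z = -1" using Psi_remove[OF i0(1), of z] card_K[OF i0(1)] i0_2_1
    by (simp add: coweight_def)
  moreover have "Psi z = 1" using psi_one[OF assoc_class_self] by (simp add: psi_f)
  ultimately show False by simp
qed

end

lemma omega_eq_0_imp:
  fixes \<omega> :: "'a \<Rightarrow> real"
  assumes "normalized_homogeneous_weight \<omega>" "x \<noteq> 0" "\<omega> x = 0"
  shows "card F2_components \<ge> 2"
proof -
  have psi_one: "psi y = 1" if "y \<in> assoc_class x" for y
    using omega_eq[OF assms(1), of x] assms(3) that
    by (intro class_average_eq_1D[OF finite_ring _ psi_le_1]) simp_all
  then have "psi x \<noteq> 0" using assoc_class_self[of x] by simp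
  then have "x \<in> range f" using psi_outside_range by blast
  then obtain z where "x = f z" by blast
  then show ?thesis using card_binary_components_ge_2 psi_one assms(2) by blast
qed

definition idem :: "nat set \<Rightarrow> 'a" where
  "idem U = lift (\<lambda>i j k. if i \<in> U \<and> j = k then \<one>\<^bsub>K i\<^esub> else \<zero>\<^bsub>K i\<^esub>)"

lemma phi_idem:
  "i < t \<Longrightarrow> j < m i \<Longrightarrow> k < m i \<Longrightarrow> \<phi> (idem U) i j k = (if i \<in> U \<and> j = k then \<one>\<^bsub>K i\<^esub> else \<zero>\<^bsub>K i\<^esub>)"
  unfolding idem_def by (rule phi_lift) (auto simp: ring.ring_simprules(2,6)[OF ring_K])

context
  fixes U :: "nat set"
  assumes U: "U \<subseteq> F2_components"
begin

lemma F2_component_if_mem: "i \<in> U \<Longrightarrow> i < t \<and> q i = 2 \<and> m i = 1"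
  using U unfolding F2_components_def by blast

lemma f_idem_mult_idem:
  assumes "V \<subseteq> U"
  shows "f (idem V * idem U) = f (idem V)"
  unfolding phi_eq_iff[symmetric]
proof (intro allI impI)
  fix i j k assume ijk: "i < t" "j < m i" "k < m i"
  interpret ring "K i" using ring_K ijk by blast
  show "\<phi> (idem V * idem U) i j k = \<phi> (idem V) i j k"
  proof (cases "i \<in> U")
    case True
    then have "m i = 1" "j = 0" "k = 0" using F2_component_if_mem ijk by auto
    then show ?thesis using phi_mult_1x1[OF ijk(1)] phi_idem ijk True by auto
  next
    case False
    then have "\<phi> (idem V * idem U) i j k = \<zero>\<^bsub>K i\<^esub>"
      by (intro phi_mult_zero_col[OF ijk]) (simp add: phi_idem ijk)
    then show ?thesis using False assms phi_idem[OF ijk] by auto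
  qed
qed

lemma f_mult_idem:
  obtains V where "V \<subseteq> U" "f (r * idem U) = f (idem V)"
proof
  let ?V = "{i \<in> U. \<phi> r i 0 0 = \<one>\<^bsub>K i\<^esub>}"
  show "?V \<subseteq> U" by blast
  show "f (r * idem U) = f (idem ?V)"
    unfolding phi_eq_iff[symmetric]
  proof (intro allI impI)
    fix i j k assume ijk: "i < t" "j < m i" "k < m i"
    interpret field "K i" using field_K ijk by blast
    show "\<phi> (r * idem U) i j k = \<phi> (idem ?V) i j k"
    proof (cases "i \<in> U")
      case True
      then have i: "m i = 1" "j = 0" "k = 0" "card (carrier (K i)) = 2"
        using F2_component_if_mem ijk card_K by auto
      have "\<phi> r i 0 0 \<in> {\<zero>\<^bsub>K i\<^esub>, \<one>\<^bsub>K i\<^esub>}"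
        using phi_in_carrier[OF ijk(1)] carrier_eq_zero_one[OF finite_K[OF ijk(1)] i(4)] i by auto
      then show ?thesis using phi_mult_1x1[OF ijk(1) i(1)] phi_idem ijk True i by auto
    next
      case False
      then have "\<phi> (r * idem U) i j k = \<zero>\<^bsub>K i\<^esub>"
        by (intro phi_mult_zero_col[OF ijk]) (simp add: phi_idem ijk)
      then show ?thesis using False phi_idem[OF ijk] by auto
    qed
  qed
qed

lemma principal_left_ideal_idem:
  "principal_left_ideal (f (idem U)) = (\<lambda>V. f (idem V)) ` Pow U"
proof (intro subset_antisym subsetI)
  fix y assume "y \<in> principal_left_ideal (f (idem U))"
  then obtain r where "y = f (r * idem U)" unfolding principal_left_ideal_iff by (auto simp: f_mult)
  then show "y \<in> (\<lambda>V. f (idem V)) ` Pow U" using f_mult_idem[of r] by blast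
next
  fix y assume "y \<in> (\<lambda>V. f (idem V)) ` Pow U"
  then obtain V where "V \<subseteq> U" "y = f (idem V)" by blast
  then have "y = idem V * f (idem U)" using f_idem_mult_idem by (simp add: f_mult)
  then show "y \<in> principal_left_ideal (f (idem U))" unfolding principal_left_ideal_iff by blast
qed

lemma inj_on_f_idem: "inj_on (\<lambda>V. f (idem V)) (Pow U)"
proof (rule inj_onI, rule ccontr)
  fix V V' assume V: "V \<in> Pow U" "V' \<in> Pow U" "f (idem V) = f (idem V')" "V \<noteq> V'"
  then obtain i where i: "i \<in> U" "i \<in> V \<longleftrightarrow> i \<notin> V'" by blast
  then have it: "i < t" "m i = 1" using F2_component_if_mem by auto
  interpret field "K i" using field_K it by blast
  have "\<forall>i<t. \<forall>j<m i. \<forall>k<m i. \<phi> (idem V) i j k = \<phi> (idem V') i j k"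
    using V(3) phi_eq_iff by blast
  then have "\<phi> (idem V) i 0 0 = \<phi> (idem V') i 0 0" using it by simp
  then show False using phi_idem[of i 0 0] it i(2) by (auto split: if_splits)
qed

lemma f_idem_neq_zero: "U \<noteq> {} \<Longrightarrow> f (idem U) \<noteq> 0"
proof -
  assume "U \<noteq> {}"
  then obtain i where i: "i \<in> U" "i < t" "m i = 1" using F2_component_if_mem by blast
  interpret field "K i" using field_K i by blast
  have "\<phi> (idem U) i 0 0 \<noteq> \<zero>\<^bsub>K i\<^esub>" using phi_idem[of i 0 0] i by simp
  then show ?thesis using phi_eq_zero_iff i by fastforce
qed

lemma Psi_idem: "Psi (idem U) = (-1) ^ card U"
proof -
  have "coweight (K i) (trace i (idem U)) = (if i \<in> U then -1 else 1)" if "i < t" for i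
  proof (cases "i \<in> U")
    case True
    interpret field "K i" using field_K that by blast
    have "m i = 1" "q i = 2" using F2_component_if_mem True by auto
    then show ?thesis
      using True that trace_1x1 phi_idem[OF that] card_K[OF that] by (simp add: coweight_def)
  next
    case False
    then have "trace i (idem U) = \<zero>\<^bsub>K i\<^esub>" by (intro trace_eq_zero that) (simp add: phi_idem that)
    then show ?thesis using False by (simp add: coweight_def)
  qed
  then have "Psi (idem U) = (\<Prod>i<t. if i \<in> U then -1 else 1)"
    unfolding Psi_def by (intro prod.cong refl) simp
  also have "\<dots> = (\<Prod>i\<in>U. -1)"
    using F2_component_if_mem by (intro prod.mono_neutral_cong_right) auto
  finally show ?thesis by simp
qed

end

lemma assoc_class_f_idem:
  assumes U: "U \<subseteq> F2_components"
  shows "assoc_class (f (idem U)) = {f (idem U)}"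
proof -
  have "y = f (idem U)" if y: "y \<in> assoc_class (f (idem U))" for y
  proof -
    have "y \<in> (\<lambda>V. f (idem V)) ` Pow U"
      using y assoc_class_subset principal_left_ideal_idem[OF U] by auto
    then obtain V where V: "V \<subseteq> U" "y = f (idem V)" by blast
    have V': "V \<subseteq> F2_components" using U V(1) by blast
    have fin: "finite U" "finite V" using U V' finite_F2_components by (auto intro: finite_subset)
    have "principal_left_ideal (f (idem V)) = principal_left_ideal (f (idem U))"
      using y V(2) unfolding assoc_class_def by simp
    then have "card ((\<lambda>V. f (idem V)) ` Pow V) = card ((\<lambda>V. f (idem V)) ` Pow U)"
      by (simp only: principal_left_ideal_idem[OF U] principal_left_ideal_idem[OF V'])
    then have "card (Pow V) = card (Pow U)"
      by (simp add: card_image[OF inj_on_f_idem[OF U]] card_image[OF inj_on_f_idem[OF V']])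
    then have "card V = card U" using fin by (simp add: card_Pow)
    then have "V = U" using V(1) fin by (simp add: card_subset_eq)
    then show ?thesis using V(2) by simp
  qed
  then show ?thesis using assoc_class_self by blast
qed

lemma omega_f_idem:
  fixes \<omega> :: "'a \<Rightarrow> real"
  assumes "normalized_homogeneous_weight \<omega>"
    and U: "U \<subseteq> F2_components"
  shows "\<omega> (f (idem U)) = 1 - (-1) ^ card U"
  using omega_eq[OF assms(1)]
  by (simp add: class_average_def assoc_class_f_idem[OF U] psi_f Psi_idem[OF U])

lemma omega_eq_0_if:
  fixes \<omega> :: "'a \<Rightarrow> real"
  assumes "normalized_homogeneous_weight \<omega>" and "card F2_components \<ge> 2"
  shows "\<exists>x. x \<noteq> 0 \<and> \<omega> x = 0"
proof -
  obtain U where U: "U \<subseteq> F2_components" "card U = 2"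
    using obtain_subset_with_card_n[OF assms(2)] by blast
  have "U \<noteq> {}" using U(2) by auto
  then have "f (idem U) \<noteq> 0" by (rule f_idem_neq_zero[OF U(1)])
  moreover have "\<omega> (f (idem U)) = 0" using omega_f_idem[OF assms(1) U(1)] U(2) by simp
  ultimately show ?thesis by blast
qed

end

theorem corollary4p3:
  fixes \<omega> :: "'a::ring_1 \<Rightarrow> real"
    and t :: nat and q m :: "nat \<Rightarrow> nat"
    and K :: "nat \<Rightarrow> 'c ring"
    and \<phi> :: "'a \<Rightarrow> nat \<Rightarrow> nat \<Rightarrow> nat \<Rightarrow> 'c"
  assumes "finite_frobenius_ring TYPE('a)"
    and "wedderburn_artin t q m K \<phi>"
    and "normalized_homogeneous_weight \<omega>"
  shows "(\<exists>x. x \<noteq> 0 \<and> \<omega> x = 0) \<longleftrightarrow> card {i. i < t \<and> q i = 2 \<and> m i = 1} \<ge> 2"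
proof -
  have fin: "finite (UNIV :: 'a set)"
    using assms(1) unfolding finite_frobenius_ring_def by blast
  obtain f :: "'a \<Rightarrow> 'a" where "\<forall>x y. f (x + y) = f x + f y" "\<forall>r x. f (r * x) = r * f x"
    "range f = left_socle" "{x. f x = 0} = jacobson_rad"
    using assms(1) unfolding finite_frobenius_ring_def by blast
  with fin interpret frobenius_wedderburn_artin t q m K \<phi> f
    using assms(2) by unfold_locales auto
  show ?thesis
    using omega_eq_0_imp[OF assms(3)] omega_eq_0_if[OF assms(3)] unfolding F2_components_def by blast
qed

end
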